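(* Assume (A1)–(A3). Consider AdaFom: $m_0=0$, $\hat v_0=0$, and for $t\ge1$: $m_t=\beta_{1,t}m_{t-1}+(1-\beta_{1,t})g_t$, $\hat v_t=(1-1/t)\hat v_{t-1}+(1/t)g_t^2$ (so $\hat v_t=\frac1t\sum_{i=1}^tg_i^2$), $x_{t+1}=x_t-\alpha_tm_t/\sqrt{\hat v_t}$, with $\alpha_t=1/\sqrt t$ and $\beta_{1,t}\le\beta_1\in[0,1)$, $(\beta_{1,t})$ non-increasing. Suppose there exists $c>0$ with $|(g_1)_i|\ge c$ for all $i\in[d]$ almost surely. Then there exist constants $Q_1',Q_2'$ independent of $T$ such that for every $T\ge1$, $$\min_{t\in[T]}\mathbb{E}\big[\|\nabla f(x_t)\|^2\big]\le\frac{1}{\sqrt T}\big(Q_1'+Q_2'\log T\big).$$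
   Context: Problem: minimize $f(x)=\mathbb{E}_\xi[f(x;\xi)]$ over $x\in\mathbb{R}^d$; $g_t$ is a stochastic gradient evaluated at $x_t$. All vector operations (division, square root, squaring) are coordinatewise; $\|\cdot\|$ is the Euclidean norm; $[T]=\{1,\dots,T\}$. Assumptions: (A1) $f$ is differentiable, $\|\nabla f(x)-\nabla f(y)\|\le L\|x-y\|$ for all $x,y$, and $f$ attains its minimum at some $x^*$ with $f(x^* )>-\infty$. (A2) $\|\nabla f(x)\|\le H$ for all $x$ and $\|g_t\|\le H$ for all $t$ almost surely. (A3) $g_t=\nabla f(x_t)+\zeta_t$ where the noise $\zeta_t$ has zero mean conditionally on $g_1,\dots,g_{t-1}$. Expectations are over all randomness in $\{g_t\}$. *)

theory Defs
  imports "HOL-Probability.Probability"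
begin

text \<open>State of AdaFom after n steps: (x_{n+1}, m_n, hat v_n), driven by the
  gradient sequence gs (gs t = g_t for t >= 1). All operations coordinatewise.\<close>
primrec adafom_state ::
  "(nat \<Rightarrow> real) \<Rightarrow> real^'d \<Rightarrow> (nat \<Rightarrow> real^'d) \<Rightarrow> nat \<Rightarrow> ((real^'d) \<times> (real^'d) \<times> (real^'d))"
where
  "adafom_state beta x1 gs 0 = (x1, 0, 0)"
| "adafom_state beta x1 gs (Suc n) =
     (let (x, m, v) = adafom_state beta x1 gs n;
          t = Suc n;
          m' = beta t *\<^sub>R m + (1 - beta t) *\<^sub>R gs t;
          v' = (1 - 1 / real t) *\<^sub>R v + (1 / real t) *\<^sub>R (\<chi> i. (gs t $ i)\<^sup>2);
          x' = x - (1 / sqrt (real t)) *\<^sub>R (\<chi> i. m' $ i / sqrt (v' $ i))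
      in (x', m', v'))"

definition adafom_x ::
  "(nat \<Rightarrow> real) \<Rightarrow> real^'d \<Rightarrow> (nat \<Rightarrow> real^'d) \<Rightarrow> nat \<Rightarrow> real^'d" where
  "adafom_x beta x1 gs t = fst (adafom_state beta x1 gs (t - 1))"

definition hist :: "'a measure \<Rightarrow> (nat \<Rightarrow> 'a \<Rightarrow> 'b::topological_space) \<Rightarrow> nat \<Rightarrow> 'a measure" where
  "hist M g t = sigma (space M) (\<Union>i\<in>{1..<t}. {g i -` A \<inter> space M | A. A \<in> sets borel})"

end

theory Submission
  imports Defs
begin

text \<open>
  L-smoothness gives, along every path, that the descent terms <grad f(x_t), D_t> of the steps
  D_t = x_t - x_{t+1} sum to at most f(x_1) - min f + L * sum_t |D_t|^2, and normalising each
  coordinate by the running sum of the g_s^2 makes sum_{t<=T} |D_t|^2 = O(log T). Unrolling the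
  momentum recursion, the descent terms control the decoupled terms <grad f(x_k), eta_{k-1} g_k>,
  whose step sizes eta_{k-1} are known before g_k is drawn; by the noise assumption their
  expectation is E sum_i (grad_i f(x_k))^2 eta_{k-1,i} >= E |grad f(x_k)|^2 / (H sqrt T).
  Summing over k = 2..T yields (T - 1) min_t E |grad f(x_t)|^2 / (H sqrt T) = O(log T).
\<close>

lemma vec_nth_borel_measurable [measurable]:
  fixes h :: "'a \<Rightarrow> real^'n"
  assumes "h \<in> borel_measurable N"
  shows "(\<lambda>w. h w $ i) \<in> borel_measurable N"
proof -
  have "(\<lambda>w. h w $ i) = (\<lambda>w. h w \<bullet> axis i 1)" by (simp add: inner_axis)
  then show ?thesis using assms by simp
qed

lemma vec_lambda_borel_measurable:
  fixes F :: "'i::finite \<Rightarrow> 'a \<Rightarrow> real"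
  assumes "\<And>i. F i \<in> borel_measurable N"
  shows "(\<lambda>w. \<chi> i. F i w) \<in> borel_measurable N"
proof -
  have "(\<chi> i. F i w) = (\<Sum>i\<in>UNIV. (\<chi> i. F i w) $ i *s axis i 1)" for w
    by (rule basis_expansion[symmetric])
  then have "(\<lambda>w. \<chi> i. F i w) = (\<lambda>w. \<Sum>i\<in>UNIV. F i w *\<^sub>R axis i 1)"
    by (simp add: scalar_mult_eq_scaleR)
  then show ?thesis using assms by simp
qed

lemma power2_norm_vec: "(norm (v::real^'n))\<^sup>2 = (\<Sum>i\<in>UNIV. (v $ i)\<^sup>2)"
  unfolding power2_norm_eq_inner inner_vec_def by (simp add: power2_eq_square)

lemma norm_le_norm_if_abs_vec_nth_le:
  fixes v w :: "real^'n"
  assumes "\<And>i. \<bar>v $ i\<bar> \<le> \<bar>w $ i\<bar>"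
  shows "norm v \<le> norm w"
proof -
  have "(norm v)\<^sup>2 \<le> (norm w)\<^sup>2" unfolding power2_norm_vec
    using assms abs_le_square_iff by (intro sum_mono) blast
  then show ?thesis by (rule power2_le_imp_le) simp
qed

lemma lipschitz_constant_nonneg:
  fixes F :: "real^'d \<Rightarrow> 'b::real_normed_vector"
  assumes "\<And>x y. norm (F x - F y) \<le> L * norm (x - y)"
  shows "0 \<le> L"
  using order_trans[OF norm_ge_zero assms[of "axis undefined 1" 0]] by simp

text \<open>The Lipschitz constant of the gradient enters without the usual factor 1/2.\<close>
lemma lipschitz_gradient_upper_bound:
  fixes f :: "'a::real_inner \<Rightarrow> real"
  assumes f_deriv: "\<And>x. (f has_derivative (\<lambda>h. grad x \<bullet> h)) (at x)"
    and lip: "\<And>x y. norm (grad x - grad y) \<le> L * norm (x - y)" and L: "0 \<le> L"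
  shows "f y \<le> f x + grad x \<bullet> (y - x) + L * (norm (y - x))\<^sup>2"
proof -
  define p where "p s = x + s *\<^sub>R (y - x)" for s :: real
  have d: "((\<lambda>s. f (p s)) has_derivative (\<lambda>h. grad (p s) \<bullet> (h *\<^sub>R (y - x)))) (at s within S)" for s S
  proof -
    have "(p has_derivative (\<lambda>h. h *\<^sub>R (y - x))) (at s within S)"
      unfolding p_def by (auto intro!: derivative_eq_intros)
    from has_derivative_compose[OF this f_deriv] show ?thesis by simp
  qed
  have "continuous_on {0..1} (\<lambda>s. f (p s))"
    by (rule has_derivative_continuous_on) (use d in blast)
  then obtain \<xi> where xi: "0 < \<xi>" "\<xi> < 1"
    and mvt: "f (p 1) - f (p 0) = grad (p \<xi>) \<bullet> ((1 - 0) *\<^sub>R (y - x))"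
    using mvt[of 0 1 "\<lambda>s. f (p s)" "\<lambda>s h. grad (p s) \<bullet> (h *\<^sub>R (y - x))"] d by auto
  have "(grad (p \<xi>) - grad x) \<bullet> (y - x) \<le> norm (grad (p \<xi>) - grad x) * norm (y - x)"
    by (rule norm_cauchy_schwarz)
  also have "\<dots> \<le> L * norm (p \<xi> - x) * norm (y - x)"
    by (intro mult_right_mono lip) auto
  also have "\<dots> = \<xi> * (L * (norm (y - x))\<^sup>2)"
    using xi by (simp add: p_def power2_eq_square)
  also have "\<dots> \<le> L * (norm (y - x))\<^sup>2"
    using xi L by (intro mult_left_le_one_le) auto
  finally show ?thesis using mvt by (simp add: p_def inner_diff_left)
qed

lemma sum_le_of_contraction:
  fixes u r :: "nat \<Rightarrow> real"
  assumes "u 0 = 0" "\<And>t. 0 \<le> u t" "\<And>t. 1 \<le> t \<Longrightarrow> u t \<le> b * u (t - 1) + r t"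
    and "0 \<le> b" "b < 1"
  shows "(\<Sum>t=1..T. u t) \<le> (\<Sum>t=1..T. r t) / (1 - b)"
proof -
  have "(1 - b) * (\<Sum>t=1..T. u t) + b * u T \<le> (\<Sum>t=1..T. r t)"
  proof (induction T)
    case (Suc T)
    have "u (Suc T) \<le> b * u T + r (Suc T)" using assms(3)[of "Suc T"] by simp
    then show ?case using Suc by (simp add: algebra_simps)
  qed (use assms in simp)
  moreover have "0 \<le> b * u T" using assms by simp
  ultimately have "(1 - b) * (\<Sum>t=1..T. u t) \<le> (\<Sum>t=1..T. r t)" by linarith
  then show ?thesis using assms by (simp add: field_simps)
qed

text \<open>Each term q/(s + q) is at most ln (s + q) - ln s, so the sum telescopes.\<close>
lemma sum_div_partial_sums_le_ln:
  fixes q :: "nat \<Rightarrow> real"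
  assumes "\<And>t. 0 \<le> q t" "0 < q 1" "1 \<le> T"
  shows "(\<Sum>t=1..T. q t / (\<Sum>s=1..t. q s)) \<le> 1 + ln (\<Sum>s=1..T. q s) - ln (q 1)"
  using assms(3)
proof (induction T rule: dec_induct)
  case base then show ?case using assms by simp
next
  case (step T)
  define a where "a = (\<Sum>s=1..T. q s)"
  have "q 1 \<le> a" unfolding a_def using step(1) assms(1) by (intro member_le_sum) auto
  then have a: "0 < a" using assms(2) by linarith
  have "ln (a / (a + q (Suc T))) \<le> a / (a + q (Suc T)) - 1"
    using a assms(1) by (intro ln_le_minus_one) (simp add: add_pos_nonneg)
  then have "q (Suc T) / (a + q (Suc T)) \<le> ln (a + q (Suc T)) - ln a"
    using a assms(1)[of "Suc T"] by (simp add: ln_div add_pos_nonneg field_simps)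
  then show ?case using step by (simp add: a_def)
qed

lemma geometric_sum_le:
  fixes b :: real
  assumes "0 \<le> b" "b < 1"
  shows "(\<Sum>t=k..T. b ^ (t - k)) \<le> 1 / (1 - b)"
proof (cases "k \<le> T")
  case True
  have "(\<Sum>t=k..T. b ^ (t - k)) = (\<Sum>j=0..T - k. b ^ j)"
    by (subst sum.atLeastAtMost_shift_0[OF True]) (simp add: comp_def)
  moreover have "(1 - b) * (\<Sum>j=0..T - k. b ^ j) \<le> 1"
    using sum_gp_multiplied[of 0 "T - k" b] assms by simp
  ultimately show ?thesis using assms by (simp add: field_simps)
qed (use assms in simp)

section \<open>Unrolling a momentum recursion\<close>

definition momentum_prod :: "(nat \<Rightarrow> real) \<Rightarrow> nat \<Rightarrow> nat \<Rightarrow> real" where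
  "momentum_prod beta k t = (\<Prod>j\<in>{k<..t}. beta j)"

definition momentum_weight :: "(nat \<Rightarrow> real) \<Rightarrow> nat \<Rightarrow> nat \<Rightarrow> real" where
  "momentum_weight beta k T = (\<Sum>t=k..T. momentum_prod beta k t)"

lemma momentum_prod_self [simp]: "momentum_prod beta k k = 1"
  by (simp add: momentum_prod_def)

lemma momentum_prod_Suc: "k \<le> t \<Longrightarrow> momentum_prod beta k (Suc t) = momentum_prod beta k t * beta (Suc t)"
proof -
  assume "k \<le> t"
  then have "{k<..Suc t} = insert (Suc t) {k<..t}" by auto
  then show ?thesis unfolding momentum_prod_def by (simp add: mult.commute)
qed

lemma eq_momentum_prod_sum:
  assumes "A 0 = 0"
  shows "A t = (\<Sum>k=1..t. momentum_prod beta k t * (A k - beta k * A (k - 1)))"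
proof (induction t)
  case (Suc t)
  have "(\<Sum>k=1..t. momentum_prod beta k (Suc t) * (A k - beta k * A (k - 1)))
      = beta (Suc t) * (\<Sum>k=1..t. momentum_prod beta k t * (A k - beta k * A (k - 1)))"
    by (simp add: sum_distrib_left momentum_prod_Suc algebra_simps)
  then show ?case using Suc by simp
qed (use assms in simp)

lemma sum_eq_momentum_weight_sum:
  assumes "A 0 = 0"
  shows "(\<Sum>t=1..T. A t) = (\<Sum>k=1..T. momentum_weight beta k T * (A k - beta k * A (k - 1)))"
proof (induction T)
  case (Suc T)
  have "momentum_weight beta k (Suc T) = momentum_weight beta k T + momentum_prod beta k (Suc T)"
    if "k \<le> Suc T" for k
    using that by (simp add: momentum_weight_def)
  then have "(\<Sum>k=1..Suc T. momentum_weight beta k (Suc T) * (A k - beta k * A (k - 1)))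
     = (\<Sum>k=1..Suc T. momentum_weight beta k T * (A k - beta k * A (k - 1)))
       + (\<Sum>k=1..Suc T. momentum_prod beta k (Suc T) * (A k - beta k * A (k - 1)))"
    by (simp add: sum.distrib[symmetric] algebra_simps)
  also have "(\<Sum>k=1..Suc T. momentum_weight beta k T * (A k - beta k * A (k - 1)))
     = (\<Sum>k=1..T. momentum_weight beta k T * (A k - beta k * A (k - 1)))"
    by (simp add: momentum_weight_def)
  also have "(\<Sum>k=1..Suc T. momentum_prod beta k (Suc T) * (A k - beta k * A (k - 1))) = A (Suc T)"
    using eq_momentum_prod_sum[where A=A and t="Suc T" and beta=beta, OF assms] by simp
  finally show ?case using Suc by simp
qed simp

context
  fixes beta :: "nat \<Rightarrow> real" and b1 :: real
  assumes beta_bounds: "\<And>t. 1 \<le> t \<Longrightarrow> 0 \<le> beta t \<and> beta t \<le> b1" and b1: "0 \<le> b1" "b1 < 1"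
begin

lemma momentum_prod_nonneg: "0 \<le> momentum_prod beta k t"
  unfolding momentum_prod_def by (intro prod_nonneg) (use beta_bounds in auto)

lemma momentum_weight_ge_1: "k \<le> T \<Longrightarrow> 1 \<le> momentum_weight beta k T"
  using member_le_sum[of k "{k..T}" "momentum_prod beta k"] momentum_prod_nonneg
  by (simp add: momentum_weight_def)

lemma momentum_weight_le: "momentum_weight beta k T \<le> 1 / (1 - b1)"
proof -
  have "momentum_prod beta k t \<le> b1 ^ (t - k)" for t
  proof -
    have "momentum_prod beta k t \<le> (\<Prod>j\<in>{k<..t}. b1)"
      unfolding momentum_prod_def by (intro prod_mono) (use beta_bounds in auto)
    then show ?thesis by simp
  qed
  then have "momentum_weight beta k T \<le> (\<Sum>t=k..T. b1 ^ (t - k))"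
    unfolding momentum_weight_def by (intro sum_mono)
  also have "\<dots> \<le> 1 / (1 - b1)" using geometric_sum_le b1 by blast
  finally show ?thesis .
qed

end

section \<open>The AdaFom iteration\<close>

definition adafom_mom :: "(nat \<Rightarrow> real) \<Rightarrow> real^'d \<Rightarrow> (nat \<Rightarrow> real^'d) \<Rightarrow> nat \<Rightarrow> real^'d" where
  "adafom_mom beta x1 gs n = fst (snd (adafom_state beta x1 gs n))"

definition adafom_var :: "(nat \<Rightarrow> real) \<Rightarrow> real^'d \<Rightarrow> (nat \<Rightarrow> real^'d) \<Rightarrow> nat \<Rightarrow> real^'d" where
  "adafom_var beta x1 gs n = snd (snd (adafom_state beta x1 gs n))"

definition grad_sq_sum :: "(nat \<Rightarrow> real^'d) \<Rightarrow> nat \<Rightarrow> 'd \<Rightarrow> real" where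
  "grad_sq_sum gs t i = (\<Sum>k=1..t. (gs k $ i)\<^sup>2)"

text \<open>Since alpha_t = 1 / sqrt t and hat v_t = grad_sq_sum / t, the coordinatewise step size
  alpha_t / sqrt (hat v_t) of AdaFom is 1 / sqrt (grad_sq_sum).\<close>
definition adafom_rate :: "(nat \<Rightarrow> real^'d) \<Rightarrow> nat \<Rightarrow> 'd \<Rightarrow> real" where
  "adafom_rate gs t i = 1 / sqrt (grad_sq_sum gs t i)"

definition adafom_step :: "(nat \<Rightarrow> real) \<Rightarrow> real^'d \<Rightarrow> (nat \<Rightarrow> real^'d) \<Rightarrow> nat \<Rightarrow> real^'d" where
  "adafom_step beta x1 gs t = (\<chi> i. adafom_mom beta x1 gs t $ i * adafom_rate gs t i)"

lemma adafom_mom_0 [simp]: "adafom_mom beta x1 gs 0 = 0"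
  by (simp add: adafom_mom_def)

lemma adafom_mom_Suc:
  "adafom_mom beta x1 gs (Suc n) =
     beta (Suc n) *\<^sub>R adafom_mom beta x1 gs n + (1 - beta (Suc n)) *\<^sub>R gs (Suc n)"
  by (simp add: adafom_mom_def Let_def split: prod.split)

lemma adafom_var_Suc:
  "adafom_var beta x1 gs (Suc n) = (1 - 1 / real (Suc n)) *\<^sub>R adafom_var beta x1 gs n
     + (1 / real (Suc n)) *\<^sub>R (\<chi> i. (gs (Suc n) $ i)\<^sup>2)"
  by (simp add: adafom_var_def Let_def split: prod.split)

lemma fst_adafom_state_Suc:
  "fst (adafom_state beta x1 gs (Suc n)) = fst (adafom_state beta x1 gs n)
     - (1 / sqrt (real (Suc n))) *\<^sub>R
         (\<chi> i. adafom_mom beta x1 gs (Suc n) $ i / sqrt (adafom_var beta x1 gs (Suc n) $ i))"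
  by (simp add: adafom_mom_def adafom_var_def Let_def split: prod.split)

lemma adafom_var_eq: "adafom_var beta x1 gs t $ i = grad_sq_sum gs t i / real t"
proof (induction t)
  case 0 then show ?case by (simp add: adafom_var_def grad_sq_sum_def)
next
  case (Suc n)
  have "(1 - 1 / (1 + real n)) * (grad_sq_sum gs n i / real n) = grad_sq_sum gs n i / (1 + real n)"
    if "n \<noteq> 0"
  proof -
    have "1 - 1 / (1 + real n) = real n / (1 + real n)" by (simp add: field_simps)
    then show ?thesis using that by simp
  qed
  then show ?case using Suc
    by (cases "n = 0") (simp_all add: adafom_var_Suc grad_sq_sum_def add_divide_distrib)
qed

lemma adafom_x_Suc:
  assumes "1 \<le> t"
  shows "adafom_x beta x1 gs (Suc t) = adafom_x beta x1 gs t - adafom_step beta x1 gs t"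
proof -
  obtain n where t: "t = Suc n" using assms by (cases t) auto
  have "(1 / sqrt (real t)) *\<^sub>R
          (\<chi> i. adafom_mom beta x1 gs t $ i / sqrt (adafom_var beta x1 gs t $ i))
      = adafom_step beta x1 gs t"
    by (simp add: adafom_step_def adafom_rate_def adafom_var_eq vec_eq_iff real_sqrt_divide)
  moreover have "adafom_x beta x1 gs (Suc t) = fst (adafom_state beta x1 gs t)"
    "adafom_x beta x1 gs t = fst (adafom_state beta x1 gs n)"
    by (simp_all only: adafom_x_def t diff_Suc_1)
  ultimately show ?thesis by (simp only: t fst_adafom_state_Suc)
qed

lemma adafom_state_borel_measurable:
  fixes g :: "nat \<Rightarrow> 'a \<Rightarrow> real^'d"
  assumes "\<And>s. 1 \<le> s \<Longrightarrow> s \<le> n \<Longrightarrow> g s \<in> borel_measurable N"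
  shows "(\<lambda>w. fst (adafom_state beta x1 (\<lambda>s. g s w) n)) \<in> borel_measurable N \<and>
         (\<lambda>w. adafom_mom beta x1 (\<lambda>s. g s w) n) \<in> borel_measurable N \<and>
         (\<lambda>w. adafom_var beta x1 (\<lambda>s. g s w) n) \<in> borel_measurable N"
  using assms
proof (induction n)
  case 0 then show ?case by (simp add: adafom_var_def)
next
  case (Suc n)
  then have IH: "(\<lambda>w. fst (adafom_state beta x1 (\<lambda>s. g s w) n)) \<in> borel_measurable N"
      "(\<lambda>w. adafom_mom beta x1 (\<lambda>s. g s w) n) \<in> borel_measurable N"
      "(\<lambda>w. adafom_var beta x1 (\<lambda>s. g s w) n) \<in> borel_measurable N" by auto
  have g: "g (Suc n) \<in> borel_measurable N" using Suc.prems by auto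
  have m: "(\<lambda>w. adafom_mom beta x1 (\<lambda>s. g s w) (Suc n)) \<in> borel_measurable N"
    unfolding adafom_mom_Suc using IH g by measurable
  have "(\<lambda>w. \<chi> i. (g (Suc n) w $ i)\<^sup>2) \<in> borel_measurable N"
    by (rule vec_lambda_borel_measurable) (use g in measurable)
  then have v: "(\<lambda>w. adafom_var beta x1 (\<lambda>s. g s w) (Suc n)) \<in> borel_measurable N"
    unfolding adafom_var_Suc using IH by measurable
  have "(\<lambda>w. \<chi> i. adafom_mom beta x1 (\<lambda>s. g s w) (Suc n) $ i
                   / sqrt (adafom_var beta x1 (\<lambda>s. g s w) (Suc n) $ i)) \<in> borel_measurable N"
    by (rule vec_lambda_borel_measurable) (use m v in measurable)
  then have "(\<lambda>w. fst (adafom_state beta x1 (\<lambda>s. g s w) (Suc n))) \<in> borel_measurable N"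
    unfolding fst_adafom_state_Suc using IH by measurable
  with m v show ?case by blast
qed

lemma adafom_x_borel_measurable:
  fixes g :: "nat \<Rightarrow> 'a \<Rightarrow> real^'d"
  assumes "\<And>s. 1 \<le> s \<Longrightarrow> s < k \<Longrightarrow> g s \<in> borel_measurable N"
  shows "(\<lambda>w. adafom_x beta x1 (\<lambda>s. g s w) k) \<in> borel_measurable N"
proof -
  have "\<And>s. 1 \<le> s \<Longrightarrow> s \<le> k - 1 \<Longrightarrow> g s \<in> borel_measurable N" using assms by auto
  with adafom_state_borel_measurable[of "k - 1" g N beta x1] show ?thesis unfolding adafom_x_def by blast
qed

lemma grad_sq_sum_borel_measurable:
  fixes g :: "nat \<Rightarrow> 'a \<Rightarrow> real^'d"
  assumes "\<And>s. 1 \<le> s \<Longrightarrow> s \<le> n \<Longrightarrow> g s \<in> borel_measurable N"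
  shows "(\<lambda>w. grad_sq_sum (\<lambda>s. g s w) n i) \<in> borel_measurable N"
  unfolding grad_sq_sum_def
  by (intro borel_measurable_sum borel_measurable_power vec_nth_borel_measurable) (use assms in auto)

section \<open>Bounds along a single sample path\<close>

text \<open>The assumptions do not mention x1, so the locale predicate takes only gs, beta, H, c, b1.\<close>
locale adafom_path =
  fixes gs :: "nat \<Rightarrow> real^'d" and x1 :: "real^'d" and beta :: "nat \<Rightarrow> real" and H c b1 :: real
  assumes g_bounded: "\<And>t. 1 \<le> t \<Longrightarrow> norm (gs t) \<le> H"
    and first_g_ge: "\<And>i. c \<le> \<bar>gs 1 $ i\<bar>"
    and c_pos: "0 < c"
    and beta_bounds: "\<And>t. 1 \<le> t \<Longrightarrow> 0 \<le> beta t \<and> beta t \<le> b1"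
    and b1: "0 \<le> b1" "b1 < 1"
begin

abbreviation "mom t \<equiv> adafom_mom beta x1 gs t"
abbreviation "step t \<equiv> adafom_step beta x1 gs t"
abbreviation "rate t i \<equiv> adafom_rate gs t i"
abbreviation "sqsum t i \<equiv> grad_sq_sum gs t i"

lemma abs_g_le: "1 \<le> t \<Longrightarrow> \<bar>gs t $ i\<bar> \<le> H"
  using component_le_norm_cart[of "gs t" i] g_bounded[of t] by linarith

lemma c_le_H: "c \<le> H"
  using first_g_ge[of undefined] abs_g_le[of 1 undefined] by linarith

lemma sqsum_Suc: "sqsum (Suc t) i = sqsum t i + (gs (Suc t) $ i)\<^sup>2"
  by (simp add: grad_sq_sum_def)

lemma sqsum_nonneg: "0 \<le> sqsum t i"
  unfolding grad_sq_sum_def by (intro sum_nonneg) auto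

lemma sqsum_ge: "1 \<le> t \<Longrightarrow> c\<^sup>2 \<le> sqsum t i"
proof -
  assume "1 \<le> t"
  have "c\<^sup>2 \<le> (gs 1 $ i)\<^sup>2" using power_mono[OF first_g_ge[of i], of 2] c_pos by simp
  also have "\<dots> \<le> sqsum t i" unfolding grad_sq_sum_def using \<open>1 \<le> t\<close> by (intro member_le_sum) auto
  finally show ?thesis .
qed

lemma sqsum_pos: "1 \<le> t \<Longrightarrow> 0 < sqsum t i"
  by (rule order_less_le_trans[OF _ sqsum_ge]) (use c_pos in auto)

lemma sqsum_le: "sqsum t i \<le> real t * H\<^sup>2"
proof -
  have "(gs k $ i)\<^sup>2 \<le> H\<^sup>2" if "1 \<le> k" for k
    using abs_g_le[OF that, of i] by (metis abs_ge_zero power2_abs power_mono)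
  then have "sqsum t i \<le> real (card {1..t}) * H\<^sup>2"
    unfolding grad_sq_sum_def by (intro sum_bounded_above) auto
  then show ?thesis by simp
qed

lemma sqrt_sqsum_ge: "1 \<le> t \<Longrightarrow> c \<le> sqrt (sqsum t i)"
  using sqsum_ge[of t i] c_pos real_le_rsqrt by blast

lemma abs_mom_le: "\<bar>mom t $ i\<bar> \<le> H"
proof (induction t)
  case 0 then show ?case using c_le_H c_pos by simp
next
  case (Suc n)
  have b: "0 \<le> beta (Suc n)" "beta (Suc n) \<le> 1" using beta_bounds[of "Suc n"] b1 by auto
  have "mom (Suc n) $ i = beta (Suc n) * mom n $ i + (1 - beta (Suc n)) * gs (Suc n) $ i"
    by (simp add: adafom_mom_Suc)
  also have "\<bar>\<dots>\<bar> \<le> \<bar>beta (Suc n) * mom n $ i\<bar> + \<bar>(1 - beta (Suc n)) * gs (Suc n) $ i\<bar>"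
    by (rule abs_triangle_ineq)
  also have "\<dots> = beta (Suc n) * \<bar>mom n $ i\<bar> + (1 - beta (Suc n)) * \<bar>gs (Suc n) $ i\<bar>"
    using b by (simp add: abs_mult)
  also have "\<dots> \<le> beta (Suc n) * H + (1 - beta (Suc n)) * H"
    using b Suc.IH abs_g_le[of "Suc n" i] by (intro add_mono mult_left_mono) auto
  finally show ?case by (simp add: algebra_simps)
qed

lemma rate_nonneg: "0 \<le> rate t i"
  by (simp add: adafom_rate_def sqsum_nonneg)

lemma rate_le: "1 \<le> t \<Longrightarrow> rate t i \<le> 1 / c"
  unfolding adafom_rate_def using sqrt_sqsum_ge[of t i] c_pos
  by (intro divide_left_mono) (auto intro: mult_pos_pos order_less_le_trans)

lemma rate_Suc_le: "1 \<le> t \<Longrightarrow> rate (Suc t) i \<le> rate t i"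
  unfolding adafom_rate_def using sqsum_pos[of t i] sqsum_Suc[of t i]
  by (intro divide_left_mono) (auto intro!: mult_pos_pos add_pos_nonneg)

lemma rate_ge:
  assumes "1 \<le> t" "t \<le> T"
  shows "1 / (H * sqrt (real T)) \<le> rate t i"
proof -
  have "sqsum t i \<le> real T * H\<^sup>2"
    using sqsum_le[of t i] assms(2) by (meson of_nat_le_iff order_trans mult_right_mono zero_le_power2)
  then have "sqrt (sqsum t i) \<le> sqrt (real T * H\<^sup>2)" by (rule real_sqrt_le_mono)
  also have "\<dots> = H * sqrt (real T)" using c_le_H c_pos by (simp add: real_sqrt_mult mult.commute)
  finally have le: "sqrt (sqsum t i) \<le> H * sqrt (real T)" .
  have pos: "0 < sqrt (sqsum t i)" using sqsum_pos[OF assms(1)] by simp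
  with le have "0 < H * sqrt (real T)" by linarith
  with pos have "0 < H * sqrt (real T) * sqrt (sqsum t i)" by simp
  with le show ?thesis unfolding adafom_rate_def by (intro divide_left_mono) auto
qed

lemma abs_step_le:
  assumes "1 \<le> t"
  shows "\<bar>step t $ i\<bar> \<le> H / c"
proof -
  have "\<bar>step t $ i\<bar> = \<bar>mom t $ i\<bar> * rate t i"
    by (simp add: adafom_step_def abs_mult rate_nonneg)
  also have "\<dots> \<le> H * (1 / c)"
    using c_le_H c_pos rate_nonneg by (intro mult_mono abs_mom_le rate_le assms) auto
  finally show ?thesis by simp
qed

lemma step_sq_contraction:
  assumes "1 \<le> t"
  shows "(mom t $ i)\<^sup>2 / sqsum t i
    \<le> b1 * ((mom (t - 1) $ i)\<^sup>2 / sqsum (t - 1) i) + (gs t $ i)\<^sup>2 / sqsum t i"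
proof -
  obtain n where n: "t = Suc n" using assms by (cases t) auto
  define m q b where "m = mom n $ i" and "q = gs t $ i" and "b = beta t"
  have b: "0 \<le> b" "b \<le> b1" using beta_bounds[OF assms] by (auto simp: b_def)
  have S: "0 < sqsum t i" using sqsum_pos[OF assms] .
  have "(b * m + (1 - b) * q)\<^sup>2 \<le> b * m\<^sup>2 + (1 - b) * q\<^sup>2"
  proof -
    have "b * m\<^sup>2 + (1 - b) * q\<^sup>2 - (b * m + (1 - b) * q)\<^sup>2 = b * (1 - b) * (m - q)\<^sup>2"
      by (simp add: power2_eq_square algebra_simps)
    moreover have "0 \<le> b * (1 - b) * (m - q)\<^sup>2" using b b1 by simp
    ultimately show ?thesis by linarith
  qed
  then have "(mom t $ i)\<^sup>2 / sqsum t i \<le> (b * m\<^sup>2 + (1 - b) * q\<^sup>2) / sqsum t i"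
    using S by (simp add: n adafom_mom_Suc m_def q_def b_def divide_right_mono)
  also have "\<dots> = b * (m\<^sup>2 / sqsum t i) + (1 - b) * (q\<^sup>2 / sqsum t i)"
    by (simp add: add_divide_distrib)
  moreover have "b * (m\<^sup>2 / sqsum t i) \<le> b1 * (m\<^sup>2 / sqsum n i)"
  proof (cases "n = 0")
    case False
    then have "m\<^sup>2 / sqsum t i \<le> m\<^sup>2 / sqsum n i"
      using sqsum_pos[of n i] sqsum_Suc[of n i] S by (intro divide_left_mono) (auto simp: n)
    then show ?thesis using b sqsum_nonneg[of t i] by (intro mult_mono) auto
  qed (simp add: m_def)
  moreover have "(1 - b) * (q\<^sup>2 / sqsum t i) \<le> q\<^sup>2 / sqsum t i"
    using b b1 S by (intro mult_left_le_one_le) auto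
  ultimately have "(mom t $ i)\<^sup>2 / sqsum t i \<le> b1 * (m\<^sup>2 / sqsum n i) + q\<^sup>2 / sqsum t i"
    by linarith
  moreover have "t - 1 = n" using n by simp
  ultimately show ?thesis by (simp only: m_def q_def)
qed

lemma sum_sq_norm_step_le:
  assumes "1 \<le> T"
  shows "(\<Sum>t=1..T. (norm (step t))\<^sup>2)
    \<le> real CARD('d) / (1 - b1) * (1 + ln (real T) + 2 * ln (H / c))"
proof -
  define u where "u i t = (mom t $ i)\<^sup>2 / sqsum t i" for i :: 'd and t
  have per_coordinate: "(\<Sum>t=1..T. u i t) \<le> (1 + ln (real T) + 2 * ln (H / c)) / (1 - b1)" for i
  proof -
    have "ln (sqsum T i) \<le> ln (real T * H\<^sup>2)"
      using sqsum_pos[OF assms, of i] sqsum_le[of T i] by simp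
    moreover have "ln (c\<^sup>2) \<le> ln (sqsum 1 i)"
      using sqsum_ge[of 1 i] sqsum_pos[of 1 i] c_pos by simp
    moreover have "ln (real T * H\<^sup>2) = ln (real T) + 2 * ln H"
      using assms c_le_H c_pos by (simp add: ln_mult ln_realpow)
    moreover have "ln (c\<^sup>2) = 2 * ln c" using c_pos by (simp add: ln_realpow)
    moreover have "ln (H / c) = ln H - ln c" using c_le_H c_pos by (simp add: ln_div)
    moreover have "(\<Sum>t=1..T. (gs t $ i)\<^sup>2 / sqsum t i) \<le> 1 + ln (sqsum T i) - ln (sqsum 1 i)"
      using sum_div_partial_sums_le_ln[of "\<lambda>t. (gs t $ i)\<^sup>2", OF _ _ assms] sqsum_pos[of 1 i]
      by (simp add: grad_sq_sum_def)
    ultimately have "(\<Sum>t=1..T. (gs t $ i)\<^sup>2 / sqsum t i) \<le> 1 + ln (real T) + 2 * ln (H / c)"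
      by linarith
    moreover have "(\<Sum>t=1..T. u i t) \<le> (\<Sum>t=1..T. (gs t $ i)\<^sup>2 / sqsum t i) / (1 - b1)"
      by (rule sum_le_of_contraction) (use step_sq_contraction b1 in \<open>auto simp: u_def sqsum_nonneg\<close>)
    ultimately show ?thesis using b1 by (smt (verit) divide_right_mono)
  qed
  have "(norm (step t))\<^sup>2 = (\<Sum>i\<in>UNIV. u i t)" for t
    by (simp add: power2_norm_vec u_def adafom_step_def adafom_rate_def power_divide
        power_mult_distrib sqsum_nonneg)
  then have "(\<Sum>t=1..T. (norm (step t))\<^sup>2) = (\<Sum>t=1..T. \<Sum>i\<in>UNIV. u i t)"
    by simp
  also have "\<dots> = (\<Sum>i\<in>UNIV. \<Sum>t=1..T. u i t)"
    by (rule sum.swap)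
  also have "\<dots> \<le> (\<Sum>i\<in>(UNIV::'d set). (1 + ln (real T) + 2 * ln (H / c)) / (1 - b1))"
    by (intro sum_mono per_coordinate)
  finally show ?thesis by simp
qed

end

lemma scaled_inner_ge:
  fixes u v :: "'a::real_inner"
  assumes "norm u \<le> L * r" "norm v \<le> r" "0 \<le> b" "b \<le> 1" "0 \<le> L"
  shows "- (L * r\<^sup>2) \<le> b * (u \<bullet> v)"
proof -
  have "\<bar>u \<bullet> v\<bar> \<le> norm u * norm v" by (rule Cauchy_Schwarz_ineq2)
  also have "\<dots> \<le> L * r * r"
    using assms order_trans[OF norm_ge_zero assms(1)] by (intro mult_mono) auto
  finally have "- (L * r\<^sup>2) \<le> u \<bullet> v" by (simp add: power2_eq_square)
  then have "b * (- (L * r\<^sup>2)) \<le> b * (u \<bullet> v)" using assms(3) by (rule mult_left_mono)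
  moreover have "- (L * r\<^sup>2) \<le> b * (- (L * r\<^sup>2))"
    using assms by (simp add: mult_left_le_one_le)
  ultimately show ?thesis by linarith
qed

lemma perturbed_product_ge:
  fixes p q e e' C :: real
  assumes "\<bar>p\<bar> \<le> C" "\<bar>q\<bar> \<le> C" "e \<le> e'"
  shows "q * e' - 2 * C * (e' - e) \<le> p * (e - e') + q * e"
proof -
  have "p * (e' - e) \<le> C * (e' - e)" using assms by (intro mult_right_mono) auto
  moreover have "q * (e' - e) \<le> C * (e' - e)" using assms by (intro mult_right_mono) auto
  ultimately show ?thesis by (simp add: algebra_simps)
qed

text \<open>The descent term with the step size frozen at time k - 1. Unlike the actual step, it
  depends on g_k only linearly, which is what lets the noise assumption average it out.\<close>
definition decoupled_descent ::
  "(real^'d \<Rightarrow> real^'d) \<Rightarrow> (nat \<Rightarrow> real) \<Rightarrow> real^'d \<Rightarrow> (nat \<Rightarrow> real^'d) \<Rightarrow> nat \<Rightarrow> real"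
where
  "decoupled_descent grad beta x1 gs k =
     (\<Sum>i\<in>UNIV. grad (adafom_x beta x1 gs k) $ i * adafom_rate gs (k - 1) i * gs k $ i)"

text \<open>Here d is the dimension and gap stands for f x1 - inf f.\<close>
definition adafom_bound :: "real \<Rightarrow> real \<Rightarrow> real \<Rightarrow> real \<Rightarrow> real \<Rightarrow> real \<Rightarrow> nat \<Rightarrow> real" where
  "adafom_bound d L H c b1 gap T = gap
     + (1 + 1 / (1 - b1)) * L * (d / (1 - b1) * (1 + ln (real T) + 2 * ln (H / c)))
     + 3 * d * H\<^sup>2 / (c * (1 - b1))"

lemma adafom_bound_eq:
  "adafom_bound d L H c b1 gap T
    = adafom_bound d L H c b1 gap 1 + (1 + 1 / (1 - b1)) * L * (d / (1 - b1)) * ln (real T)"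
  by (simp add: adafom_bound_def algebra_simps add_divide_distrib)

locale smooth_adafom_path = adafom_path gs x1 beta H c b1
  for gs :: "nat \<Rightarrow> real^'d" and x1 beta H c b1 +
  fixes f :: "real^'d \<Rightarrow> real" and grad :: "real^'d \<Rightarrow> real^'d" and L fmin :: real
  assumes f_deriv: "\<And>x. (f has_derivative (\<lambda>h. grad x \<bullet> h)) (at x)"
    and grad_lipschitz: "\<And>x y. norm (grad x - grad y) \<le> L * norm (x - y)"
    and grad_bounded: "\<And>x. norm (grad x) \<le> H"
    and fmin_le: "\<And>x. fmin \<le> f x"
begin

abbreviation "iter t \<equiv> adafom_x beta x1 gs t"
abbreviation "descent t \<equiv> grad (iter t) \<bullet> step t"
abbreviation "decoupled k \<equiv> decoupled_descent grad beta x1 gs k"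
abbreviation "momentum_error k \<equiv>
  L * (norm (step (k - 1)))\<^sup>2 + 2 * H\<^sup>2 * (\<Sum>i\<in>UNIV. rate (k - 1) i - rate k i)"

lemma L_nonneg: "0 \<le> L"
  using grad_lipschitz by (rule lipschitz_constant_nonneg)

lemma abs_grad_le: "\<bar>grad y $ i\<bar> \<le> H"
  using component_le_norm_cart[of "grad y" i] grad_bounded[of y] by linarith

lemma descent_0: "descent 0 = 0"
proof -
  have "step 0 = 0" by (simp add: adafom_step_def vec_eq_iff)
  then show ?thesis by simp
qed

lemma sum_descent_le:
  "(\<Sum>t=1..T. descent t) \<le> f x1 - fmin + L * (\<Sum>t=1..T. (norm (step t))\<^sup>2)"
proof -
  have "f (iter (Suc T)) + (\<Sum>t=1..T. descent t) \<le> f x1 + L * (\<Sum>t=1..T. (norm (step t))\<^sup>2)"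
  proof (induction T)
    case (Suc T)
    have "iter (Suc (Suc T)) = iter (Suc T) - step (Suc T)"
      by (rule adafom_x_Suc) simp
    then have "iter (Suc (Suc T)) - iter (Suc T) = - step (Suc T)" by simp
    then have "f (iter (Suc (Suc T))) \<le> f (iter (Suc T)) - descent (Suc T) + L * (norm (step (Suc T)))\<^sup>2"
      using lipschitz_gradient_upper_bound[OF f_deriv grad_lipschitz L_nonneg,
          of "iter (Suc (Suc T))" "iter (Suc T)"] by simp
    then show ?case using Suc by (simp add: algebra_simps)
  qed (simp add: adafom_x_def)
  then show ?thesis using fmin_le[of "iter (Suc T)"] by linarith
qed

lemma momentum_descent_ge:
  assumes "2 \<le> k"
  shows "(1 - beta k) * decoupled k - momentum_error k \<le> descent k - beta k * descent (k - 1)"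
proof -
  obtain n where n: "k = Suc n" "1 \<le> n" using assms by (cases k) auto
  define a a' m g b where "a = grad (iter k)" and "a' = grad (iter n)" and "m = mom n"
    and "g = gs k" and "b = beta k"
  define e e' where "e i = rate k i" and "e' i = rate n i" for i
  define v where "v = (\<chi> i. m $ i * e i)"
  have b: "0 \<le> b" "b \<le> 1" using beta_bounds[of k] b1 assms by (auto simp: b_def)
  have ee': "e i \<le> e' i" for i using rate_Suc_le[OF n(2)] by (simp add: e_def e'_def n)
  have step_k: "step k $ i = (b * m $ i + (1 - b) * g $ i) * e i" for i
    by (simp add: adafom_step_def n adafom_mom_Suc m_def g_def e_def b_def)
  have step_n: "step n $ i = m $ i * e' i" for i
    by (simp add: adafom_step_def m_def e'_def)
  have split: "descent k - b * descent n = b * ((a - a') \<bullet> v)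
      + (\<Sum>i\<in>UNIV. b * a' $ i * m $ i * (e i - e' i) + (1 - b) * a $ i * g $ i * e i)"
    unfolding inner_vec_def inner_real_def a_def[symmetric] a'_def[symmetric] step_k step_n
    by (simp add: v_def sum_distrib_left sum_subtractf[symmetric] sum.distrib[symmetric]
        algebra_simps)
  have "norm (a - a') \<le> L * norm (step n)"
    using adafom_x_Suc[OF n(2), of beta x1 gs] grad_lipschitz[of "iter k" "iter n"]
    by (simp add: a_def a'_def n)
  moreover have "norm v \<le> norm (step n)"
    using ee' rate_nonneg
    by (intro norm_le_norm_if_abs_vec_nth_le) (simp add: v_def step_n e_def e'_def abs_mult mult_left_mono)
  ultimately have drift: "- (L * (norm (step n))\<^sup>2) \<le> b * ((a - a') \<bullet> v)"
    using b L_nonneg by (intro scaled_inner_ge)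
  have per_coordinate: "(1 - b) * a $ i * g $ i * e' i - 2 * H\<^sup>2 * (e' i - e i)
      \<le> b * a' $ i * m $ i * (e i - e' i) + (1 - b) * a $ i * g $ i * e i" for i
  proof (rule perturbed_product_ge[OF _ _ ee'])
    have "\<bar>b * a' $ i * m $ i\<bar> = b * (\<bar>a' $ i\<bar> * \<bar>m $ i\<bar>)"
      using b by (simp add: abs_mult)
    also have "\<dots> \<le> 1 * (H * H)"
      using b abs_grad_le abs_mom_le c_le_H c_pos by (intro mult_mono) (auto simp: a'_def m_def)
    finally show "\<bar>b * a' $ i * m $ i\<bar> \<le> H\<^sup>2" by (simp add: power2_eq_square)
    have "\<bar>(1 - b) * a $ i * g $ i\<bar> = (1 - b) * (\<bar>a $ i\<bar> * \<bar>g $ i\<bar>)"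
      using b by (simp add: abs_mult)
    also have "\<dots> \<le> 1 * (H * H)"
      using b abs_grad_le abs_g_le[of k i] assms c_le_H c_pos
      by (intro mult_mono) (auto simp: a_def g_def)
    finally show "\<bar>(1 - b) * a $ i * g $ i\<bar> \<le> H\<^sup>2" by (simp add: power2_eq_square)
  qed
  have "(1 - b) * decoupled k = (\<Sum>i\<in>UNIV. (1 - b) * a $ i * g $ i * e' i)"
    by (simp add: decoupled_descent_def sum_distrib_left a_def g_def e'_def n mult_ac)
  moreover have "2 * H\<^sup>2 * (\<Sum>i\<in>UNIV. rate (k - 1) i - rate k i) = (\<Sum>i\<in>UNIV. 2 * H\<^sup>2 * (e' i - e i))"
    by (simp add: sum_distrib_left e_def e'_def n)
  moreover have "(\<Sum>i\<in>UNIV. (1 - b) * a $ i * g $ i * e' i) - (\<Sum>i\<in>UNIV. 2 * H\<^sup>2 * (e' i - e i))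
      \<le> (\<Sum>i\<in>UNIV. b * a' $ i * m $ i * (e i - e' i) + (1 - b) * a $ i * g $ i * e i)"
    using sum_mono[OF per_coordinate] by (simp add: sum_subtractf)
  moreover have "k - 1 = n" using n by simp
  ultimately show ?thesis using split drift unfolding b_def by (simp only:)
qed

lemma abs_descent_1_le: "\<bar>descent 1\<bar> \<le> real CARD('d) * H\<^sup>2 / c"
proof -
  have "\<bar>descent 1\<bar> \<le> (\<Sum>i\<in>UNIV. \<bar>grad (iter 1) $ i\<bar> * \<bar>step 1 $ i\<bar>)"
    unfolding inner_vec_def inner_real_def abs_mult[symmetric] by (rule sum_abs)
  also have "\<dots> \<le> (\<Sum>i\<in>(UNIV::'d set). H * (H / c))"
    using abs_grad_le abs_step_le[of 1] c_le_H c_pos by (intro sum_mono mult_mono) auto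
  finally show ?thesis by (simp add: power2_eq_square)
qed

lemma sum_rate_decrease_le:
  assumes "1 \<le> T"
  shows "(\<Sum>k=2..T. \<Sum>i\<in>UNIV. rate (k - 1) i - rate k i) \<le> real CARD('d) / c"
proof -
  obtain n where n: "T = Suc n" using assms by (cases T) auto
  have "(\<Sum>k=2..T. rate (k - 1) i - rate k i) = rate 1 i - rate T i" for i
  proof -
    have "(\<Sum>k=2..T. rate (k - 1) i - rate k i) = - (\<Sum>k=1..n. rate (Suc k) i - rate k i)"
      unfolding n numeral_2_eq_2 sum.shift_bounds_cl_Suc_ivl by (simp add: sum_negf[symmetric])
    also have "\<dots> = rate 1 i - rate T i"
      using sum_Suc_diff[of 1 n "\<lambda>k. rate k i"] n by simp
    finally show ?thesis .
  qed
  moreover have "(\<Sum>k=2..T. \<Sum>i\<in>UNIV. rate (k - 1) i - rate k i)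
      = (\<Sum>i\<in>UNIV. \<Sum>k=2..T. rate (k - 1) i - rate k i)"
    by (rule sum.swap)
  ultimately have "(\<Sum>k=2..T. \<Sum>i\<in>UNIV. rate (k - 1) i - rate k i) = (\<Sum>i\<in>UNIV. rate 1 i - rate T i)"
    by simp
  also have "\<dots> \<le> (\<Sum>i\<in>(UNIV::'d set). 1 / c)"
    using rate_le[of 1] rate_nonneg[of T] by (intro sum_mono) (smt (verit) order_refl)
  finally show ?thesis by simp
qed

lemma sum_sq_norm_prev_step_le:
  assumes "1 \<le> T"
  shows "(\<Sum>k=2..T. (norm (step (k - 1)))\<^sup>2)
    \<le> real CARD('d) / (1 - b1) * (1 + ln (real T) + 2 * ln (H / c))"
proof -
  obtain n where n: "T = Suc n" using assms by (cases T) auto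
  have "(\<Sum>k=2..T. (norm (step (k - 1)))\<^sup>2) = (\<Sum>t=1..n. (norm (step t))\<^sup>2)"
    unfolding n numeral_2_eq_2 sum.shift_bounds_cl_Suc_ivl by simp
  also have "\<dots> \<le> (\<Sum>t=1..T. (norm (step t))\<^sup>2)"
    unfolding n by (intro sum_mono2) auto
  also have "\<dots> \<le> real CARD('d) / (1 - b1) * (1 + ln (real T) + 2 * ln (H / c))"
    by (rule sum_sq_norm_step_le[OF assms])
  finally show ?thesis .
qed

lemma momentum_error_nonneg: "2 \<le> k \<Longrightarrow> 0 \<le> momentum_error k"
  using L_nonneg rate_Suc_le[of "k - 1"]
  by (intro add_nonneg_nonneg mult_nonneg_nonneg sum_nonneg) auto

lemma sum_momentum_error_le:
  assumes "1 \<le> T"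
  shows "(\<Sum>k=2..T. momentum_error k)
    \<le> L * (real CARD('d) / (1 - b1) * (1 + ln (real T) + 2 * ln (H / c)))
      + 2 * H\<^sup>2 * (real CARD('d) / c)"
proof -
  have "(\<Sum>k=2..T. momentum_error k) = L * (\<Sum>k=2..T. (norm (step (k - 1)))\<^sup>2)
      + 2 * H\<^sup>2 * (\<Sum>k=2..T. \<Sum>i\<in>UNIV. rate (k - 1) i - rate k i)"
    by (simp add: sum.distrib sum_distrib_left)
  also have "\<dots> \<le> L * (real CARD('d) / (1 - b1) * (1 + ln (real T) + 2 * ln (H / c)))
      + 2 * H\<^sup>2 * (real CARD('d) / c)"
    using sum_sq_norm_prev_step_le[OF assms] sum_rate_decrease_le[OF assms] L_nonneg
    by (intro add_mono mult_left_mono) auto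
  finally show ?thesis .
qed

text \<open>Unrolling the momentum turns the telescoping descent estimate into a bound on the
  decoupled terms; the momentum weights lie between 1 and 1 / (1 - b1).\<close>
lemma weighted_decoupled_sum_le:
  assumes "1 \<le> T"
  shows "(\<Sum>k=2..T. momentum_weight beta k T * (1 - beta k) * decoupled k)
    \<le> adafom_bound (real CARD('d)) L H c b1 (f x1 - fmin) T"
proof -
  define d Dl where "d = real CARD('d)" and "Dl = d / (1 - b1) * (1 + ln (real T) + 2 * ln (H / c))"
  define W where "W k = momentum_weight beta k T" for k
  have W: "0 \<le> W k" "W k \<le> 1 / (1 - b1)" if "k \<le> T" for k
    using momentum_weight_ge_1[of beta b1 k T] momentum_weight_le[of beta b1 k T]
      beta_bounds b1 that by (auto simp: W_def)
  have "(\<Sum>t=1..T. descent t) = W 1 * descent 1 + (\<Sum>k=2..T. W k * (descent k - beta k * descent (k - 1)))"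
    using sum_eq_momentum_weight_sum[where A=descent and beta=beta and T=T, OF descent_0] assms
    by (simp add: W_def sum.atLeast_Suc_atMost numeral_2_eq_2 descent_0)
  moreover have "- (d * H\<^sup>2 / c / (1 - b1)) \<le> W 1 * descent 1"
  proof -
    have "W 1 * \<bar>descent 1\<bar> \<le> 1 / (1 - b1) * (d * H\<^sup>2 / c)"
      using W[of 1] assms abs_descent_1_le c_pos b1 by (intro mult_mono) (auto simp: d_def)
    moreover have "- (W 1 * \<bar>descent 1\<bar>) \<le> W 1 * descent 1"
      using mult_left_mono[of "- \<bar>descent 1\<bar>" "descent 1" "W 1"] W[of 1] assms by simp
    ultimately show ?thesis by (simp add: mult.commute)
  qed
  moreover have "W k * (1 - beta k) * decoupled k - momentum_error k / (1 - b1)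
      \<le> W k * (descent k - beta k * descent (k - 1))" if "k \<in> {2..T}" for k
  proof -
    define e where "e = momentum_error k"
    have "W k * ((1 - beta k) * decoupled k - e) \<le> W k * (descent k - beta k * descent (k - 1))"
      using momentum_descent_ge[of k] that W[of k] unfolding e_def by (intro mult_left_mono) auto
    moreover have "W k * e \<le> 1 / (1 - b1) * e"
      using W[of k] momentum_error_nonneg[of k] that unfolding e_def by (intro mult_right_mono) auto
    ultimately have "W k * (1 - beta k) * decoupled k - e / (1 - b1)
        \<le> W k * (descent k - beta k * descent (k - 1))"
      by (simp add: algebra_simps)
    then show ?thesis by (simp only: e_def)
  qed
  then have "(\<Sum>k=2..T. W k * (1 - beta k) * decoupled k - momentum_error k / (1 - b1))
      \<le> (\<Sum>k=2..T. W k * (descent k - beta k * descent (k - 1)))"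
    by (rule sum_mono)
  then have "(\<Sum>k=2..T. W k * (1 - beta k) * decoupled k) - (\<Sum>k=2..T. momentum_error k) / (1 - b1)
      \<le> (\<Sum>k=2..T. W k * (descent k - beta k * descent (k - 1)))"
    by (simp add: sum_subtractf sum_divide_distrib)
  moreover have "(\<Sum>k=2..T. momentum_error k) / (1 - b1) \<le> (L * Dl + 2 * H\<^sup>2 * (d / c)) / (1 - b1)"
    using sum_momentum_error_le[OF assms] b1 by (simp add: divide_right_mono Dl_def d_def)
  moreover have "L * (\<Sum>t=1..T. (norm (step t))\<^sup>2) \<le> L * Dl"
    unfolding Dl_def d_def by (rule mult_left_mono[OF sum_sq_norm_step_le[OF assms] L_nonneg])
  then have "(\<Sum>t=1..T. descent t) \<le> f x1 - fmin + L * Dl"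
    using sum_descent_le[of T] by linarith
  ultimately have "(\<Sum>k=2..T. W k * (1 - beta k) * decoupled k)
      \<le> f x1 - fmin + L * Dl + d * H\<^sup>2 / c / (1 - b1) + (L * Dl + 2 * H\<^sup>2 * (d / c)) / (1 - b1)"
    by linarith
  also have "\<dots> = f x1 - fmin + (1 + 1 / (1 - b1)) * L * Dl + 3 * d * H\<^sup>2 / (c * (1 - b1))"
    by (simp add: add_divide_distrib algebra_simps)
  finally show ?thesis by (simp add: W_def Dl_def d_def adafom_bound_def)
qed

end

section \<open>Expectations\<close>

lemma space_hist [simp]: "space (hist M g k) = space M"
  unfolding hist_def by (simp add: space_measure_of_conv)

lemma sets_hist:
  "sets (hist M g k) = sigma_sets (space M) (\<Union>i\<in>{1..<k}. {g i -` A \<inter> space M | A. A \<in> sets borel})"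
  unfolding hist_def by (rule sets_measure_of) auto

lemma subalgebra_hist:
  assumes "\<And>t. g t \<in> borel_measurable M"
  shows "subalgebra M (hist M g k)"
proof -
  have "(\<Union>i\<in>{1..<k}. {g i -` A \<inter> space M | A. A \<in> sets borel}) \<subseteq> sets M"
    using assms by (auto intro: measurable_sets)
  then show ?thesis
    unfolding subalgebra_def sets_hist using sets.sigma_sets_subset by simp
qed

lemma measurable_hist:
  assumes "1 \<le> s" "s < k"
  shows "g s \<in> borel_measurable (hist M g k)"
proof (rule measurableI)
  fix A :: "'b set" assume "A \<in> sets borel"
  with assms have "g s -` A \<inter> space M \<in> (\<Union>i\<in>{1..<k}. {g i -` A \<inter> space M | A. A \<in> sets borel})"
    by (intro UN_I[of s]) auto
  then show "g s -` A \<inter> space (hist M g k) \<in> sets (hist M g k)"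
    unfolding sets_hist by auto
qed simp

lemma (in sigma_finite_subalgebra) integral_mult_eq_0_if_cond_exp_eq_0:
  assumes Z: "Z \<in> borel_measurable F" and Y: "Y \<in> borel_measurable M"
    and "integrable M (\<lambda>\<omega>. Z \<omega> * Y \<omega>)"
    and "AE \<omega> in M. real_cond_exp M F Y \<omega> = 0"
  shows "(\<integral>\<omega>. Z \<omega> * Y \<omega> \<partial>M) = 0"
proof -
  have "(\<integral>\<omega>. Z \<omega> * Y \<omega> \<partial>M) = (\<integral>\<omega>. Z \<omega> * real_cond_exp M F Y \<omega> \<partial>M)"
    using real_cond_exp_intg(2)[OF assms(3) Z Y] by simp
  also have "\<dots> = (\<integral>\<omega>. 0 \<partial>M)"
    using assms(4) measurable_from_subalg[OF subalg Z] by (intro integral_cong_AE) auto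
  finally show ?thesis by simp
qed

lemma le_div_sqrt_if_weighted_sum_le:
  fixes X B \<kappa> :: real
  assumes "2 \<le> T" "0 \<le> X" "0 < \<kappa>" "real (T - 1) * (\<kappa> * X / sqrt (real T)) \<le> B"
  shows "X \<le> 2 * B / (\<kappa> * sqrt (real T))"
proof -
  have s: "0 < sqrt (real T)" using assms(1) by simp
  have "\<kappa> * X * sqrt (real T) = real T * (\<kappa> * X / sqrt (real T))"
    using s by (simp add: field_simps)
  also have "\<dots> \<le> 2 * real (T - 1) * (\<kappa> * X / sqrt (real T))"
    using assms s by (intro mult_right_mono) auto
  also have "\<dots> \<le> 2 * B" using assms(4) by simp
  finally show ?thesis using s assms(3) by (simp add: field_simps)
qed

locale adafom_stochastic = prob_space M
  for M :: "'a measure" +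
  fixes f :: "real^'d \<Rightarrow> real" and grad :: "real^'d \<Rightarrow> real^'d" and g :: "nat \<Rightarrow> 'a \<Rightarrow> real^'d"
    and x1 :: "real^'d" and beta :: "nat \<Rightarrow> real" and L H c b1 :: real
  assumes f_deriv: "\<And>x. (f has_derivative (\<lambda>h. grad x \<bullet> h)) (at x)"
    and grad_lipschitz: "\<And>x y. norm (grad x - grad y) \<le> L * norm (x - y)"
    and grad_bounded: "\<And>x. norm (grad x) \<le> H"
    and g_measurable: "\<And>t. g t \<in> borel_measurable M"
    and g_bounded: "\<And>t. 1 \<le> t \<Longrightarrow> AE \<omega> in M. norm (g t \<omega>) \<le> H"
    and noise: "\<And>t i. 1 \<le> t \<Longrightarrow>
       AE \<omega> in M. real_cond_exp M (hist M g t)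
         (\<lambda>\<omega>. (g t \<omega> - grad (adafom_x beta x1 (\<lambda>s. g s \<omega>) t)) $ i) \<omega> = 0"
    and b1: "0 \<le> b1" "b1 < 1"
    and beta_bounds: "\<And>t. 1 \<le> t \<Longrightarrow> 0 \<le> beta t \<and> beta t \<le> b1"
    and c_pos: "0 < c"
    and first_g_ge: "AE \<omega> in M. \<forall>i. c \<le> \<bar>g 1 \<omega> $ i\<bar>"
begin

abbreviation "iterate k \<omega> \<equiv> adafom_x beta x1 (\<lambda>s. g s \<omega>) k"
abbreviation "decoupled k \<omega> \<equiv> decoupled_descent grad beta x1 (\<lambda>s. g s \<omega>) k"
abbreviation "rate k i \<omega> \<equiv> adafom_rate (\<lambda>s. g s \<omega>) k i"

lemma AE_adafom_path: "AE \<omega> in M. adafom_path (\<lambda>s. g s \<omega>) beta H c b1"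
proof -
  have "AE \<omega> in M. \<forall>t. 1 \<le> t \<longrightarrow> norm (g t \<omega>) \<le> H"
    unfolding AE_all_countable by (intro allI AE_impI g_bounded)
  with first_g_ge show ?thesis
    by eventually_elim (use c_pos beta_bounds b1 in \<open>auto intro!: adafom_path.intro\<close>)
qed

lemma smooth_adafom_path:
  assumes "adafom_path (\<lambda>s. g s \<omega>) beta H c b1" "\<And>x. fmin \<le> f x"
  shows "smooth_adafom_path (\<lambda>s. g s \<omega>) beta H c b1 f grad L fmin"
  using assms f_deriv grad_lipschitz grad_bounded
  by (intro smooth_adafom_path.intro smooth_adafom_path_axioms.intro) auto

lemma H_pos: "0 < H"
proof -
  have "AE \<omega> in M. c \<le> H"
    using AE_adafom_path by eventually_elim (rule adafom_path.c_le_H)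
  then show ?thesis using c_pos by simp
qed

lemma abs_grad_le: "\<bar>grad y $ i\<bar> \<le> H"
  using component_le_norm_cart[of "grad y" i] grad_bounded[of y] by linarith

lemma grad_iterate_measurable:
  assumes "\<And>s. 1 \<le> s \<Longrightarrow> s < k \<Longrightarrow> g s \<in> borel_measurable N"
  shows "(\<lambda>\<omega>. grad (iterate k \<omega>)) \<in> borel_measurable N"
proof -
  have "L-lipschitz_on UNIV grad"
    using grad_lipschitz lipschitz_constant_nonneg[OF grad_lipschitz]
    by (simp add: lipschitz_on_def dist_norm)
  then have "grad \<in> borel_measurable borel"
    by (intro borel_measurable_continuous_onI lipschitz_on_continuous_on)
  with adafom_x_borel_measurable[OF assms] show ?thesis by (rule measurable_compose)
qed

abbreviation "scaled_grad k i \<omega> \<equiv> grad (iterate k \<omega>) $ i * rate (k - 1) i \<omega>"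
abbreviation "noise_coord k i \<omega> \<equiv> (g k \<omega> - grad (iterate k \<omega>)) $ i"

lemma scaled_grad_measurable_hist: "(\<lambda>\<omega>. scaled_grad k i \<omega>) \<in> borel_measurable (hist M g k)"
proof -
  have g_hist: "g s \<in> borel_measurable (hist M g k)" if "1 \<le> s" "s < k" for s
    using that by (rule measurable_hist)
  then have "(\<lambda>\<omega>. grad_sq_sum (\<lambda>s. g s \<omega>) (k - 1) i) \<in> borel_measurable (hist M g k)"
    by (intro grad_sq_sum_borel_measurable) auto
  then show ?thesis
    unfolding adafom_rate_def using grad_iterate_measurable[OF g_hist] by measurable
qed

lemma scaled_grad_measurable: "(\<lambda>\<omega>. scaled_grad k i \<omega>) \<in> borel_measurable M"
  using subalgebra_hist[OF g_measurable] scaled_grad_measurable_hist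
  by (rule measurable_from_subalg)

lemma integrable_scaled_grad_mult:
  assumes "2 \<le> k" "W \<in> borel_measurable M" "AE \<omega> in M. \<bar>W \<omega>\<bar> \<le> C"
  shows "integrable M (\<lambda>\<omega>. scaled_grad k i \<omega> * W \<omega>)"
proof (rule integrable_const_bound)
  show "AE \<omega> in M. norm (scaled_grad k i \<omega> * W \<omega>) \<le> H * (1 / c) * C"
    using AE_adafom_path assms(3)
  proof eventually_elim
    case (elim \<omega>)
    have "\<bar>scaled_grad k i \<omega>\<bar> \<le> H * (1 / c)"
      unfolding abs_mult
      using adafom_path.rate_le[OF elim(1), of "k - 1" i] adafom_path.rate_nonneg[OF elim(1)] assms(1)
        abs_grad_le H_pos by (intro mult_mono) auto
    then have "\<bar>scaled_grad k i \<omega>\<bar> * \<bar>W \<omega>\<bar> \<le> H * (1 / c) * C"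
      by (rule mult_mono) (use elim H_pos c_pos in auto)
    then show ?case by (simp add: abs_mult)
  qed
qed (use assms(2) scaled_grad_measurable in measurable)

text \<open>The step sizes rate (k - 1) are determined by g_1, ..., g_{k-1}, so conditioning on this
  history removes the noise of g_k.\<close>
lemma integral_scaled_grad_noise:
  assumes "2 \<le> k"
  shows "integrable M (\<lambda>\<omega>. scaled_grad k i \<omega> * noise_coord k i \<omega>)"
    and "(\<integral>\<omega>. scaled_grad k i \<omega> * noise_coord k i \<omega> \<partial>M) = 0"
proof -
  interpret F: finite_measure_subalgebra M "hist M g k"
    by unfold_locales (simp add: subalgebra_hist g_measurable)
  have noise_measurable: "(\<lambda>\<omega>. noise_coord k i \<omega>) \<in> borel_measurable M"
    using grad_iterate_measurable[OF g_measurable] g_measurable[of k] by measurable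
  show integrable: "integrable M (\<lambda>\<omega>. scaled_grad k i \<omega> * noise_coord k i \<omega>)"
  proof (rule integrable_scaled_grad_mult[OF assms noise_measurable])
    show "AE \<omega> in M. \<bar>noise_coord k i \<omega>\<bar> \<le> H + H"
      using AE_adafom_path
    proof eventually_elim
      case (elim \<omega>)
      have "\<bar>noise_coord k i \<omega>\<bar> \<le> \<bar>g k \<omega> $ i\<bar> + \<bar>grad (iterate k \<omega>) $ i\<bar>" by simp
      also have "\<dots> \<le> H + H"
        using adafom_path.abs_g_le[OF elim, of k i] abs_grad_le assms by (intro add_mono) auto
      finally show ?case .
    qed
  qed
  show "(\<integral>\<omega>. scaled_grad k i \<omega> * noise_coord k i \<omega> \<partial>M) = 0"
    using noise[of k i] assms
    by (intro F.integral_mult_eq_0_if_cond_exp_eq_0[OF scaled_grad_measurable_hist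
          noise_measurable integrable]) auto
qed

lemma integral_decoupled_descent:
  assumes "2 \<le> k"
  shows "integrable M (decoupled k)"
    and "integrable M (\<lambda>\<omega>. \<Sum>i\<in>UNIV. (grad (iterate k \<omega>) $ i)\<^sup>2 * rate (k - 1) i \<omega>)"
    and "(\<integral>\<omega>. decoupled k \<omega> \<partial>M) = (\<integral>\<omega>. (\<Sum>i\<in>UNIV. (grad (iterate k \<omega>) $ i)\<^sup>2 * rate (k - 1) i \<omega>) \<partial>M)"
proof -
  define N R where "N \<omega> = (\<Sum>i\<in>UNIV. scaled_grad k i \<omega> * noise_coord k i \<omega>)"
    and "R \<omega> = (\<Sum>i\<in>UNIV. (grad (iterate k \<omega>) $ i)\<^sup>2 * rate (k - 1) i \<omega>)" for \<omega>
  have R_eq: "R = (\<lambda>\<omega>. \<Sum>i\<in>UNIV. scaled_grad k i \<omega> * grad (iterate k \<omega>) $ i)"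
    by (simp add: fun_eq_iff R_def power2_eq_square mult_ac)
  have N_integrable: "integrable M N"
    unfolding N_def using integral_scaled_grad_noise(1)[OF assms] by simp
  have R_integrable: "integrable M R"
    unfolding R_eq using grad_iterate_measurable[OF g_measurable] abs_grad_le assms
    by (intro Bochner_Integration.integrable_sum integrable_scaled_grad_mult) auto
  have decoupled_eq: "decoupled k = (\<lambda>\<omega>. N \<omega> + R \<omega>)"
    by (simp add: fun_eq_iff decoupled_descent_def N_def R_def power2_eq_square
        sum.distrib[symmetric] algebra_simps)
  have "(\<integral>\<omega>. N \<omega> \<partial>M) = 0"
    using integral_scaled_grad_noise[OF assms] by (simp add: N_def Bochner_Integration.integral_sum)
  then show "integrable M (decoupled k)" "integrable M R"
    and "(\<integral>\<omega>. decoupled k \<omega> \<partial>M) = (\<integral>\<omega>. R \<omega> \<partial>M)"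
    using N_integrable R_integrable by (simp_all add: decoupled_eq)
qed

lemma expected_sq_grad_le_decoupled:
  assumes "2 \<le> k" "k \<le> T"
  shows "(\<integral>\<omega>. (norm (grad (iterate k \<omega>)))\<^sup>2 \<partial>M) / (H * sqrt (real T)) \<le> (\<integral>\<omega>. decoupled k \<omega> \<partial>M)"
proof -
  have "(\<integral>\<omega>. (norm (grad (iterate k \<omega>)))\<^sup>2 / (H * sqrt (real T)) \<partial>M)
      \<le> (\<integral>\<omega>. (\<Sum>i\<in>UNIV. (grad (iterate k \<omega>) $ i)\<^sup>2 * rate (k - 1) i \<omega>) \<partial>M)"
  proof (rule integral_mono_AE)
    show "integrable M (\<lambda>\<omega>. (norm (grad (iterate k \<omega>)))\<^sup>2 / (H * sqrt (real T)))"
    proof (rule integrable_const_bound)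
      show "AE \<omega> in M. norm ((norm (grad (iterate k \<omega>)))\<^sup>2 / (H * sqrt (real T))) \<le> H\<^sup>2 / (H * sqrt (real T))"
        using H_pos grad_bounded by (intro AE_I2) (simp add: divide_right_mono power_mono)
    qed (use grad_iterate_measurable[OF g_measurable] in measurable)
    show "integrable M (\<lambda>\<omega>. \<Sum>i\<in>UNIV. (grad (iterate k \<omega>) $ i)\<^sup>2 * rate (k - 1) i \<omega>)"
      using integral_decoupled_descent(2)[OF assms(1)] .
    show "AE \<omega> in M. (norm (grad (iterate k \<omega>)))\<^sup>2 / (H * sqrt (real T))
        \<le> (\<Sum>i\<in>UNIV. (grad (iterate k \<omega>) $ i)\<^sup>2 * rate (k - 1) i \<omega>)"
      using AE_adafom_path
    proof eventually_elim
      case (elim \<omega>)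
      have "(norm (grad (iterate k \<omega>)))\<^sup>2 / (H * sqrt (real T))
          = (\<Sum>i\<in>UNIV. (grad (iterate k \<omega>) $ i)\<^sup>2 * (1 / (H * sqrt (real T))))"
        by (simp add: power2_norm_vec sum_divide_distrib)
      also have "\<dots> \<le> (\<Sum>i\<in>UNIV. (grad (iterate k \<omega>) $ i)\<^sup>2 * rate (k - 1) i \<omega>)"
        using adafom_path.rate_ge[OF elim, of "k - 1" T] assms by (intro sum_mono mult_left_mono) auto
      finally show ?case .
    qed
  qed
  then show ?thesis using integral_decoupled_descent(3)[OF assms(1)] by simp
qed

lemma expected_weighted_decoupled_sum_le:
  assumes fmin: "\<And>x. fmin \<le> f x" and "1 \<le> T"
  shows "(\<Sum>k=2..T. momentum_weight beta k T * (1 - beta k) * (\<integral>\<omega>. decoupled k \<omega> \<partial>M))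
    \<le> adafom_bound (real CARD('d)) L H c b1 (f x1 - fmin) T"
proof -
  have integrable: "integrable M (decoupled k)" if "k \<in> {2..T}" for k
    using integral_decoupled_descent(1) that by auto
  then have "(\<Sum>k=2..T. momentum_weight beta k T * (1 - beta k) * (\<integral>\<omega>. decoupled k \<omega> \<partial>M))
      = (\<integral>\<omega>. (\<Sum>k=2..T. momentum_weight beta k T * (1 - beta k) * decoupled k \<omega>) \<partial>M)"
    by (subst Bochner_Integration.integral_sum) auto
  also have "\<dots> \<le> adafom_bound (real CARD('d)) L H c b1 (f x1 - fmin) T"
  proof (rule integral_le_const)
    show "integrable M (\<lambda>\<omega>. \<Sum>k=2..T. momentum_weight beta k T * (1 - beta k) * decoupled k \<omega>)"
      using integrable by (intro Bochner_Integration.integrable_sum integrable_mult_right) auto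
    show "AE \<omega> in M. (\<Sum>k=2..T. momentum_weight beta k T * (1 - beta k) * decoupled k \<omega>)
        \<le> adafom_bound (real CARD('d)) L H c b1 (f x1 - fmin) T"
      using AE_adafom_path
      by eventually_elim
        (rule smooth_adafom_path.weighted_decoupled_sum_le[OF smooth_adafom_path[OF _ fmin] assms(2)])
  qed
  finally show ?thesis .
qed

lemma min_expected_sq_grad_le:
  assumes fmin: "\<And>x. fmin \<le> f x" and "2 \<le> T"
  shows "Min ((\<lambda>t. \<integral>\<omega>. (norm (grad (iterate t \<omega>)))\<^sup>2 \<partial>M) ` {1..T})
    \<le> 2 * H * adafom_bound (real CARD('d)) L H c b1 (f x1 - fmin) T / ((1 - b1) * sqrt (real T))"
proof -
  define a where "a t = (\<integral>\<omega>. (norm (grad (iterate t \<omega>)))\<^sup>2 \<partial>M)" for t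
  define X where "X = Min (a ` {1..T})"
  define \<kappa> where "\<kappa> = (1 - b1) / H"
  have X_le: "X \<le> a k" if "k \<in> {1..T}" for k
    unfolding X_def using that by (intro Min_le) auto
  have "X \<in> a ` {1..T}" unfolding X_def using assms(2) by (intro Min_in) auto
  then have X_nonneg: "0 \<le> X" by (auto simp: a_def)
  have per_k: "\<kappa> * X / sqrt (real T)
      \<le> momentum_weight beta k T * (1 - beta k) * (\<integral>\<omega>. decoupled k \<omega> \<partial>M)" if k: "k \<in> {2..T}" for k
  proof -
    have "X / (H * sqrt (real T)) \<le> a k / (H * sqrt (real T))"
      using X_le[of k] k H_pos by (intro divide_right_mono) auto
    also have "\<dots> \<le> (\<integral>\<omega>. decoupled k \<omega> \<partial>M)"
      using expected_sq_grad_le_decoupled[of k T] k by (simp add: a_def)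
    finally have X_decoupled: "X / (H * sqrt (real T)) \<le> (\<integral>\<omega>. decoupled k \<omega> \<partial>M)" .
    have "1 \<le> momentum_weight beta k T"
      using momentum_weight_ge_1[of beta b1 k T] beta_bounds b1 k by auto
    moreover have "1 - b1 \<le> 1 - beta k" using beta_bounds[of k] k by auto
    ultimately have "1 * (1 - b1) \<le> momentum_weight beta k T * (1 - beta k)"
      using b1 by (intro mult_mono) auto
    then have "(1 - b1) * (X / (H * sqrt (real T)))
        \<le> momentum_weight beta k T * (1 - beta k) * (\<integral>\<omega>. decoupled k \<omega> \<partial>M)"
      using X_decoupled X_nonneg H_pos b1 by (intro mult_mono) auto
    then show ?thesis by (simp add: \<kappa>_def)
  qed
  have "real (T - 1) * (\<kappa> * X / sqrt (real T))
      = (\<Sum>k=2..T. \<kappa> * X / sqrt (real T))" by simp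
  also have "\<dots> \<le> (\<Sum>k=2..T. momentum_weight beta k T * (1 - beta k) * (\<integral>\<omega>. decoupled k \<omega> \<partial>M))"
    by (rule sum_mono) (rule per_k)
  also have "\<dots> \<le> adafom_bound (real CARD('d)) L H c b1 (f x1 - fmin) T"
    using expected_weighted_decoupled_sum_le[OF fmin] assms(2) by simp
  finally have "X \<le> 2 * adafom_bound (real CARD('d)) L H c b1 (f x1 - fmin) T / (\<kappa> * sqrt (real T))"
    using assms(2) X_nonneg H_pos b1 by (intro le_div_sqrt_if_weighted_sum_le) (auto simp: \<kappa>_def)
  then show ?thesis using H_pos by (simp add: X_def a_def \<kappa>_def field_simps)
qed

end

theorem corollary2:
  fixes M :: "'a measure"
    and f :: "real^'d \<Rightarrow> real" and grad :: "real^'d \<Rightarrow> real^'d"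
    and g :: "nat \<Rightarrow> 'a \<Rightarrow> real^'d"
    and x1 :: "real^'d" and beta :: "nat \<Rightarrow> real"
    and L H c b1 :: real
  assumes M: "prob_space M"
    and f_deriv: "\<And>x. (f has_derivative (\<lambda>h. grad x \<bullet> h)) (at x)"
    and grad_lip: "\<And>x y. norm (grad x - grad y) \<le> L * norm (x - y)"
    and f_min: "\<exists>xs. \<forall>x. f xs \<le> f x"
    and grad_bdd: "\<And>x. norm (grad x) \<le> H"
    and g_meas: "\<And>t. g t \<in> borel_measurable M"
    and g_bdd: "\<And>t. t \<ge> 1 \<Longrightarrow> AE \<omega> in M. norm (g t \<omega>) \<le> H"
    and noise: "\<And>t i. t \<ge> 1 \<Longrightarrow>
       AE \<omega> in M. real_cond_exp M (hist M g t)
         (\<lambda>\<omega>. (g t \<omega> - grad (adafom_x beta x1 (\<lambda>s. g s \<omega>) t)) $ i) \<omega> = 0"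
    and b1: "0 \<le> b1" "b1 < 1"
    and beta_bdd: "\<And>t. t \<ge> 1 \<Longrightarrow> 0 \<le> beta t \<and> beta t \<le> b1"
    and beta_mono: "\<And>t. t \<ge> 1 \<Longrightarrow> beta (Suc t) \<le> beta t"
    and c: "c > 0"
    and g1: "AE \<omega> in M. \<forall>i. \<bar>g 1 \<omega> $ i\<bar> \<ge> c"
  shows "\<exists>Q1 Q2. \<forall>T::nat. T \<ge> 1 \<longrightarrow>
    Min ((\<lambda>t. integral\<^sup>L M (\<lambda>\<omega>. (norm (grad (adafom_x beta x1 (\<lambda>s. g s \<omega>) t)))\<^sup>2)) ` {1..T})
      \<le> (Q1 + Q2 * ln (real T)) / sqrt (real T)"
proof -
  interpret adafom_stochastic M f grad g x1 beta L H c b1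
    using M f_deriv grad_lip grad_bdd g_meas g_bdd noise b1 beta_bdd c g1
    by (intro adafom_stochastic.intro adafom_stochastic_axioms.intro) auto
  obtain xs where fmin: "\<And>x. f xs \<le> f x" using f_min by blast
  define B where "B = adafom_bound (real CARD('d)) L H c b1 (f x1 - f xs)"
  define Q1 Q2 where "Q1 = max (H\<^sup>2) (2 * H * B 1 / (1 - b1))"
    and "Q2 = 2 * H / (1 - b1) * ((1 + 1 / (1 - b1)) * L * (real CARD('d) / (1 - b1)))"
  have "Min ((\<lambda>t. \<integral>\<omega>. (norm (grad (iterate t \<omega>)))\<^sup>2 \<partial>M) ` {1..T}) \<le> (Q1 + Q2 * ln (real T)) / sqrt (real T)"
    if "1 \<le> T" for T
  proof (cases "T = 1")
    case True
    have "(norm (grad x1))\<^sup>2 \<le> H\<^sup>2" using grad_bounded[of x1] by (simp add: power_mono)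
    then show ?thesis using True by (simp add: adafom_x_def prob_space Q1_def)
  next
    case False
    then have "Min ((\<lambda>t. \<integral>\<omega>. (norm (grad (iterate t \<omega>)))\<^sup>2 \<partial>M) ` {1..T})
        \<le> 2 * H * B T / ((1 - b1) * sqrt (real T))"
      using min_expected_sq_grad_le[OF fmin, of T] that by (simp add: B_def)
    also have "\<dots> = (2 * H * B 1 / (1 - b1) + Q2 * ln (real T)) / sqrt (real T)"
      unfolding B_def Q2_def adafom_bound_eq[where T=T]
      by (simp add: divide_divide_eq_left[symmetric] add_divide_distrib algebra_simps)
    also have "\<dots> \<le> (Q1 + Q2 * ln (real T)) / sqrt (real T)"
      unfolding Q1_def by (intro divide_right_mono add_right_mono) auto
    finally show ?thesis .
  qed
  then show ?thesis by blast
qed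

end
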